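(* Let $P$ be a maximal ranked poset. Then $|\Delta^{*}_{\mathcal O(P)}|\le|\Delta^{*}_{\mathcal C(P)}|$.
   Context: For a finite poset $P=\{p_1,\dots,p_d\}$ and $W\subset P$ put $\rho(W)=\sum_{p_i\in W}\mathbf e_i\in\mathbb R^d$ ($\rho(\emptyset)=0$). The order polytope is $\mathcal O(P)=\{x\in\mathbb R^d: 0\le x_i\le 1 \text{ for all } i,\ x_i\ge x_j \text{ if } p_i\le p_j\}$ and the chain polytope is $\mathcal C(P)=\{x\in\mathbb R^d: x_i\ge 0 \text{ for all } i,\ x_{i_1}+\dots+x_{i_k}\le 1 \text{ if } p_{i_1}<\dots<p_{i_k}\}$. Poset ideals and antichains include $\emptyset$. For a poset ideal $I$, $\max(I)$ is its set of maximal elements; for an antichain $A$, $\langle A\rangle=\{x: x\le p \text{ for some } p\in A\}$. $E^{*}_{\mathcal O(P)}$ is the set of pairs $\{I,J\}$ of distinct poset ideals such that $\mathrm{conv}\{\rho(I),\rho(J)\}$ is an edge of $\mathcal O(P)$ but $\mathrm{conv}\{\rho(\max I),\rho(\max J)\}$ is not an edge of $\mathcal C(P)$. $E^{*}_{\mathcal C(P)}$ is the set of pairs $\{A,B\}$ of distinct antichains such that $\mathrm{conv}\{\rho(A),\rho(B)\}$ is an edge of $\mathcal C(P)$ but $\mathrm{conv}\{\rho(\langle A\rangle),\rho(\langle B\rangle)\}$ is not an edge of $\mathcal O(P)$. $\Delta_{\mathcal O(P)}$ is the set of triples $\{I,J,K\}$ of pairwise distinct poset ideals such that $\mathrm{conv}\{\rho(I),\rho(J),\rho(K)\}$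 is a 2-face of $\mathcal O(P)$; $\Delta_{\mathcal C(P)}$ is the set of triples $\{A,B,C\}$ of pairwise distinct antichains such that $\mathrm{conv}\{\rho(A),\rho(B),\rho(C)\}$ is a 2-face of $\mathcal C(P)$. $\Delta^{*}_{\mathcal O(P)}$ consists of those $\{I,J,K\}\in\Delta_{\mathcal O(P)}$ for which at least one of $\{I,J\},\{J,K\},\{I,K\}$ lies in $E^{*}_{\mathcal O(P)}$; $\Delta^{*}_{\mathcal C(P)}$ consists of those $\{A,B,C\}\in\Delta_{\mathcal C(P)}$ for which at least one of $\{A,B\},\{B,C\},\{A,C\}$ lies in $E^{*}_{\mathcal C(P)}$. The length of a chain $C$ is $|C|-1$; $P$ is graded of rank $n$ if every maximal chain has length $n$, and then $P=\bigcup_{i=0}^n P_i$ where every maximal chain is $p_0<\dots<p_n$ with $p_i\in P_i$. $P$ is a maximal ranked poset if it is graded and any two elements of distinct ranks are comparable. *)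

theory Defs
  imports "HOL-Analysis.Analysis"
begin

text \<open>A finite poset is a finite type 'n of class order; points of R^d are real^'n.\<close>

definition poset_ideal :: "'n::order set \<Rightarrow> bool" where
  "poset_ideal I \<longleftrightarrow> (\<forall>x y. x \<in> I \<longrightarrow> y \<le> x \<longrightarrow> y \<in> I)"

definition poset_antichain :: "'n::order set \<Rightarrow> bool" where
  "poset_antichain A \<longleftrightarrow> (\<forall>x\<in>A. \<forall>y\<in>A. x \<le> y \<longrightarrow> x = y)"

definition poset_chain :: "'n::order set \<Rightarrow> bool" where
  "poset_chain C \<longleftrightarrow> (\<forall>x\<in>C. \<forall>y\<in>C. x \<le> y \<or> y \<le> x)"

definition maximal_chain :: "'n::order set \<Rightarrow> bool" where
  "maximal_chain C \<longleftrightarrow> poset_chain C \<and> (\<forall>D. poset_chain D \<and> C \<subseteq> D \<longrightarrow> D = C)"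

definition maxs :: "'n::order set \<Rightarrow> 'n set" where
  "maxs I = {x \<in> I. \<forall>y\<in>I. x \<le> y \<longrightarrow> y = x}"

definition down_closure :: "'n::order set \<Rightarrow> 'n set" where
  "down_closure A = {x. \<exists>p\<in>A. x \<le> p}"

definition rho :: "'n::finite set \<Rightarrow> real^'n" where
  "rho W = (\<chi> i. if i \<in> W then 1 else 0)"

definition order_polytope :: "(real^'n::{finite,order}) set" where
  "order_polytope = {x. (\<forall>i. 0 \<le> x$i \<and> x$i \<le> 1) \<and> (\<forall>i j. i \<le> j \<longrightarrow> x$j \<le> x$i)}"

definition chain_polytope :: "(real^'n::{finite,order}) set" where
  "chain_polytope = {x. (\<forall>i. 0 \<le> x$i) \<and> (\<forall>C. poset_chain C \<longrightarrow> (\<Sum>i\<in>C. x$i) \<le> 1)}"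

definition is_k_face :: "'a::euclidean_space set \<Rightarrow> int \<Rightarrow> 'a set \<Rightarrow> bool" where
  "is_k_face S k F \<longleftrightarrow> F face_of S \<and> aff_dim F = k"

definition Estar_O :: "'n::{finite,order} set set set" where
  "Estar_O = {{I, J} | I J. poset_ideal I \<and> poset_ideal J \<and> I \<noteq> J \<and>
      is_k_face (order_polytope :: (real^'n::{finite,order}) set) 1 (convex hull {rho I, rho J}) \<and>
      \<not> is_k_face (chain_polytope :: (real^'n::{finite,order}) set) 1 (convex hull {rho (maxs I), rho (maxs J)})}"

definition Estar_C :: "'n::{finite,order} set set set" where
  "Estar_C = {{A, B} | A B. poset_antichain A \<and> poset_antichain B \<and> A \<noteq> B \<and>
      is_k_face (chain_polytope :: (real^'n::{finite,order}) set) 1 (convex hull {rho A, rho B}) \<and>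
      \<not> is_k_face (order_polytope :: (real^'n::{finite,order}) set) 1
          (convex hull {rho (down_closure A), rho (down_closure B)})}"

definition Delta_O :: "'n::{finite,order} set set set" where
  "Delta_O = {{I, J, K} | I J K. poset_ideal I \<and> poset_ideal J \<and> poset_ideal K \<and>
      I \<noteq> J \<and> J \<noteq> K \<and> I \<noteq> K \<and>
      is_k_face (order_polytope :: (real^'n::{finite,order}) set) 2 (convex hull {rho I, rho J, rho K})}"

definition Delta_C :: "'n::{finite,order} set set set" where
  "Delta_C = {{A, B, C} | A B C. poset_antichain A \<and> poset_antichain B \<and> poset_antichain C \<and>
      A \<noteq> B \<and> B \<noteq> C \<and> A \<noteq> C \<and>
      is_k_face (chain_polytope :: (real^'n::{finite,order}) set) 2 (convex hull {rho A, rho B, rho C})}"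

definition Deltastar_O :: "'n::{finite,order} set set set" where
  "Deltastar_O = {T \<in> Delta_O. \<exists>I\<in>T. \<exists>J\<in>T. I \<noteq> J \<and> {I, J} \<in> Estar_O}"

definition Deltastar_C :: "'n::{finite,order} set set set" where
  "Deltastar_C = {T \<in> Delta_C. \<exists>A\<in>T. \<exists>B\<in>T. A \<noteq> B \<and> {A, B} \<in> Estar_C}"

text \<open>The rank of x is the length of the longest chain with top element x; in a graded
  poset x lies in P_i exactly when its rank is i.\<close>
definition graded :: "'n::{finite,order} itself \<Rightarrow> nat \<Rightarrow> bool" where
  "graded _ n \<longleftrightarrow> (\<forall>C::'n set. maximal_chain C \<longrightarrow> card C = n + 1)"

definition poset_rank :: "'n::{finite,order} \<Rightarrow> nat" where
  "poset_rank x = Max {card C - 1 | C. poset_chain C \<and> x \<in> C \<and> (\<forall>y\<in>C. y \<le> x)}"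

definition maximal_ranked :: "'n::{finite,order} itself \<Rightarrow> bool" where
  "maximal_ranked T \<longleftrightarrow> (\<exists>n. graded T n) \<and>
     (\<forall>x y::'n. poset_rank x \<noteq> poset_rank y \<longrightarrow> x \<le> y \<or> y \<le> x)"

end

theory Submission
  imports Defs
begin

text \<open>
  In a maximal ranked poset comparability is decided by rank, so the nonempty ideals are the
  sets \<open>below m \<union> S\<close> with \<open>S\<close> a nonempty subset of the \<open>m\<close>-th level, and the antichains
  are the subsets of single levels. Of the order polytope we only use that the vertex set of a
  face is closed under union, intersection, and the exchange \<open>P \<subset> Q \<leadsto> insert x P\<close> for
  \<open>x \<in> Q - P\<close> when \<open>Q - P\<close> is an antichain. This forces every edge of \<open>Estar_O\<close> to be
  \<open>{{}, below m \<union> S}\<close> with \<open>m \<ge> 1\<close> and \<open>card S \<ge> 2\<close>, and every triangle of \<open>Deltastar_O\<close>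
  to be a chain \<open>{} \<subset> M \<subset> N\<close>. Tight chain constraints exhibit faces of the chain polytope
  spanned by antichains in distinct levels, or by \<open>U\<close>, \<open>U - {u}\<close> and an antichain in another
  level. This lets us send each triangle of \<open>Deltastar_O\<close> to a triangle of \<open>Deltastar_C\<close>
  containing an edge \<open>{level (j - 1), V}\<close> of \<open>Estar_C\<close> with \<open>card V \<ge> 2\<close>. The map is
  injective: the member of the image of highest level (and then largest size) recovers \<open>N\<close>,
  and the other two members recover \<open>M\<close>.
\<close>

section \<open>Ranks\<close>

lemma finite_chain_lengths:
  "finite {card C - 1 | C::'n::{finite,order} set. poset_chain C \<and> x \<in> C \<and> (\<forall>y\<in>C. y \<le> x)}"
  by (rule finite_image_set) simp

lemma poset_rank_ge:
  fixes x :: "'n::{finite,order}"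
  assumes "poset_chain C" "x \<in> C" "\<forall>y\<in>C. y \<le> x"
  shows "card C - 1 \<le> poset_rank x"
  unfolding poset_rank_def using assms by (intro Max_ge finite_chain_lengths) auto

lemma poset_rank_witness:
  fixes x :: "'n::{finite,order}"
  obtains C where "poset_chain C" "x \<in> C" "\<forall>y\<in>C. y \<le> x" "card C = poset_rank x + 1"
proof -
  let ?ranks = "{card C - 1 | C::'n set. poset_chain C \<and> x \<in> C \<and> (\<forall>y\<in>C. y \<le> x)}"
  have "poset_chain {x}" by (simp add: poset_chain_def)
  hence "?ranks \<noteq> {}" by blast
  hence "poset_rank x \<in> ?ranks" unfolding poset_rank_def by (intro Max_in finite_chain_lengths)
  then obtain C where "poset_chain C" "x \<in> C" "\<forall>y\<in>C. y \<le> x" "poset_rank x = card C - 1" by auto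
  moreover have "card C > 0" using \<open>x \<in> C\<close> by (auto simp: card_gt_0_iff)
  ultimately show thesis using that[of C] by linarith
qed

lemma poset_rank_strict_mono:
  fixes x y :: "'n::{finite,order}"
  assumes "x < y"
  shows "poset_rank x < poset_rank y"
proof -
  obtain C where C: "poset_chain C" "x \<in> C" "\<forall>z\<in>C. z \<le> x" "card C = poset_rank x + 1"
    by (rule poset_rank_witness)
  have below_y: "\<forall>z\<in>insert y C. z \<le> y" using C(3) assms by (auto intro: order_trans)
  hence "poset_chain (insert y C)" using C(1) by (auto simp: poset_chain_def)
  hence "card (insert y C) - 1 \<le> poset_rank y" using below_y by (intro poset_rank_ge) auto
  moreover have "y \<notin> C" using C(3) assms by (auto dest: leD)
  ultimately show ?thesis using C(4) by simp
qed

text \<open>A longest chain below \<open>x\<close> meets every rank up to that of \<open>x\<close>, since its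
  elements have pairwise distinct ranks.\<close>
lemma poset_rank_attained:
  fixes x :: "'n::{finite,order}"
  assumes "j \<le> poset_rank x"
  shows "\<exists>y::'n. poset_rank y = j"
proof -
  obtain C where C: "poset_chain C" "x \<in> C" "\<forall>z\<in>C. z \<le> x" "card C = poset_rank x + 1"
    by (rule poset_rank_witness)
  have "inj_on poset_rank C"
  proof (rule inj_onI)
    fix y z assume "y \<in> C" "z \<in> C" "poset_rank y = poset_rank z"
    moreover from this have "y < z \<or> z < y \<or> y = z"
      using C(1) by (auto simp: poset_chain_def order.order_iff_strict)
    ultimately show "y = z" using poset_rank_strict_mono by force
  qed
  hence "card (poset_rank ` C) = card {..poset_rank x}" using C(4) by (simp add: card_image)
  moreover have "poset_rank z \<le> poset_rank x" if "z \<in> C" for z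
  proof -
    have "z < x \<or> z = x" using C(3) that by (auto simp: order.order_iff_strict)
    thus ?thesis using poset_rank_strict_mono[of z x] by auto
  qed
  hence "poset_rank ` C \<subseteq> {..poset_rank x}" by auto
  ultimately have "poset_rank ` C = {..poset_rank x}" by (intro card_subset_eq) auto
  hence "j \<in> poset_rank ` C" using assms by simp
  thus ?thesis by blast
qed

lemma maximal_ranked_less_iff:
  assumes "maximal_ranked TYPE('n::{finite,order})"
  shows "(x::'n) < y \<longleftrightarrow> poset_rank x < poset_rank y"
proof
  assume "poset_rank x < poset_rank y"
  moreover from this have "x \<le> y \<or> y \<le> x" using assms unfolding maximal_ranked_def by auto
  moreover have "\<not> y < x" using \<open>poset_rank x < poset_rank y\<close> poset_rank_strict_mono by force
  ultimately show "x < y" using \<open>poset_rank x < poset_rank y\<close> by (auto simp: order.order_iff_strict)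
qed (rule poset_rank_strict_mono)

lemma rho_nth: "rho W $ i = (if i \<in> W then 1 else 0)"
  by (simp add: rho_def)

lemma rho_eq_iff [simp]: "rho A = rho B \<longleftrightarrow> A = B"
  by (auto simp: vec_eq_iff rho_nth split: if_splits)

text \<open>The functional \<open>\<Sum>i\<in>W. x$i - \<Sum>i\<notin>W. x$i\<close> attains \<open>card W\<close> at \<open>rho W\<close> and at most
  \<open>card W - 1\<close> at every other 0/1-vector.\<close>
lemma rho_mem_convex_hull_rho:
  fixes W :: "'n::finite set"
  assumes "finite \<W>" "rho W \<in> convex hull (rho ` \<W>)"
  shows "W \<in> \<W>"
proof (rule ccontr)
  assume W: "W \<notin> \<W>"
  define a :: "real^'n" where "a = (\<chi> i. if i \<in> W then 1 else -1)"
  have a_rho: "a \<bullet> rho S = (\<Sum>i\<in>UNIV. if i \<in> S then (if i \<in> W then 1 else -1) else 0)" for S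
    unfolding inner_vec_def a_def rho_def by (intro sum.cong) auto
  have "a \<bullet> rho S \<le> real (card W) - 1" if "S \<in> \<W>" for S
  proof -
    have "S \<noteq> W" using that W by blast
    then obtain i0 where i0: "(i0 \<in> S) \<noteq> (i0 \<in> W)" by blast
    have "a \<bullet> rho S \<le> (\<Sum>i\<in>UNIV. (if i \<in> W then 1 else 0) - (if i = i0 then 1 else 0))"
      unfolding a_rho by (intro sum_mono) (use i0 in auto)
    also have "\<dots> = real (card W) - 1"
      by (simp add: sum_subtractf sum.If_cases)
    finally show ?thesis .
  qed
  hence "convex hull (rho ` \<W>) \<subseteq> {x. a \<bullet> x \<le> real (card W) - 1}"
    by (intro hull_minimal) (auto simp: convex_halfspace_le)
  moreover have "a \<bullet> rho W = real (card W)"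
    unfolding a_rho by (simp add: sum.If_cases)
  ultimately show False using assms(2) by force
qed

lemma aff_dim_convex_hull_rho2:
  fixes A B :: "'n::finite set"
  assumes "A \<noteq> B"
  shows "aff_dim (convex hull {rho A, rho B}) = 1"
  using assms aff_dim_affine_independent[OF affine_independent_2[of "rho A" "rho B"]]
  by (simp add: aff_dim_convex_hull)

lemma not_collinear_rho3:
  fixes A B C :: "'n::finite set"
  assumes "A \<noteq> B" "A \<noteq> C" "B \<noteq> C"
  shows "\<not> collinear {rho A, rho B, rho C}"
proof
  assume "collinear {rho A, rho B, rho C}"
  hence "collinear {0, rho A - rho B, rho C - rho B}" by (subst (asm) collinear_3) auto
  moreover have "rho A - rho B \<noteq> 0" "rho C - rho B \<noteq> 0" using assms by auto
  ultimately obtain c where c: "rho C - rho B = c *\<^sub>R (rho A - rho B)"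
    unfolding collinear_lemma by blast
  obtain i where i: "(i \<in> A) \<noteq> (i \<in> B)" using assms(1) by blast
  have "(if i \<in> C then 1 else 0) - (if i \<in> B then 1 else 0) =
      c * ((if i \<in> A then 1 else 0) - (if i \<in> B then (1::real) else 0))"
    using arg_cong[OF c, of "\<lambda>v. v $ i"] by (simp add: rho_nth)
  hence "c = 0 \<or> c = 1" using i by (auto split: if_splits)
  hence "rho C = rho B \<or> rho C = rho A" using c by auto
  thus False using assms(2,3) by auto
qed

lemma aff_dim_convex_hull_rho3:
  fixes A B C :: "'n::finite set"
  assumes "A \<noteq> B" "A \<noteq> C" "B \<noteq> C"
  shows "aff_dim (convex hull {rho A, rho B, rho C}) = 2"
proof -
  have "\<not> affine_dependent {rho A, rho B, rho C}"
    using not_collinear_rho3[OF assms] collinear_3_eq_affine_dependent by blast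
  from aff_dim_affine_independent[OF this] show ?thesis
    using assms by (simp add: aff_dim_convex_hull)
qed

lemma mem_convex_hull_rho2:
  fixes y :: "real^'n::finite"
  assumes "U \<inter> V = {}" "U \<noteq> {}" "V \<noteq> {}" and nonneg: "\<forall>i. 0 \<le> y $ i"
    and zero: "\<forall>i. i \<notin> U \<union> V \<longrightarrow> y $ i = 0"
    and sum: "\<And>u v. u \<in> U \<Longrightarrow> v \<in> V \<Longrightarrow> y $ u + y $ v = 1"
  shows "y \<in> convex hull {rho U, rho V}"
proof -
  obtain u0 v0 where u0: "u0 \<in> U" and v0: "v0 \<in> V" using assms(2,3) by blast
  define t where "t = y $ v0"
  have "y $ i = (1 - t) * rho U $ i + t * rho V $ i" for i
  proof (cases "i \<in> U")
    case True
    thus ?thesis using sum[OF True v0] assms(1) v0 by (auto simp: t_def rho_nth)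
  next
    case False
    thus ?thesis using sum[OF u0, of i] sum[OF u0 v0] zero by (auto simp: t_def rho_nth)
  qed
  hence "y = (1 - t) *\<^sub>R rho U + t *\<^sub>R rho V" by (simp add: vec_eq_iff)
  moreover have "0 \<le> t" "t \<le> 1"
    using nonneg[rule_format, of u0] nonneg[rule_format, of v0] sum[OF u0 v0] unfolding t_def
    by linarith+
  ultimately show ?thesis unfolding convex_hull_2 by force
qed

lemma mem_convex_hull_rho3:
  fixes y :: "real^'n::finite"
  assumes "U \<inter> V = {}" "U \<inter> W = {}" "V \<inter> W = {}" "U \<noteq> {}" "V \<noteq> {}" "W \<noteq> {}"
    and nonneg: "\<forall>i. 0 \<le> y $ i" and zero: "\<forall>i. i \<notin> U \<union> V \<union> W \<longrightarrow> y $ i = 0"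
    and sum: "\<And>u v w. u \<in> U \<Longrightarrow> v \<in> V \<Longrightarrow> w \<in> W \<Longrightarrow> y $ u + y $ v + y $ w = 1"
  shows "y \<in> convex hull {rho U, rho V, rho W}"
proof -
  obtain u0 v0 w0 where u0: "u0 \<in> U" and v0: "v0 \<in> V" and w0: "w0 \<in> W" using assms(4-6) by blast
  define \<alpha> \<beta> \<gamma> where "\<alpha> = y $ u0" and "\<beta> = y $ v0" and "\<gamma> = y $ w0"
  have "y $ i = \<alpha> * rho U $ i + \<beta> * rho V $ i + \<gamma> * rho W $ i" for i
  proof -
    consider "i \<in> U" | "i \<in> V" | "i \<in> W" | "i \<notin> U \<union> V \<union> W" by blast
    thus ?thesis
    proof cases
      case 1 thus ?thesis using sum[OF 1 v0 w0] sum[OF u0 v0 w0] assms(1-3)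
        by (auto simp: rho_nth \<alpha>_def \<beta>_def \<gamma>_def)
    next
      case 2 thus ?thesis using sum[OF u0 2 w0] sum[OF u0 v0 w0] assms(1-3)
        by (auto simp: rho_nth \<alpha>_def \<beta>_def \<gamma>_def)
    next
      case 3 thus ?thesis using sum[OF u0 v0 3] sum[OF u0 v0 w0] assms(1-3)
        by (auto simp: rho_nth \<alpha>_def \<beta>_def \<gamma>_def)
    qed (use zero in \<open>simp add: rho_nth\<close>)
  qed
  hence "y = \<alpha> *\<^sub>R rho U + \<beta> *\<^sub>R rho V + \<gamma> *\<^sub>R rho W" by (simp add: vec_eq_iff)
  moreover have "0 \<le> \<alpha>" "0 \<le> \<beta>" "0 \<le> \<gamma>" "\<alpha> + \<beta> + \<gamma> = 1"
    using nonneg sum[OF u0 v0 w0] by (auto simp: \<alpha>_def \<beta>_def \<gamma>_def)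
  ultimately show ?thesis unfolding convex_hull_3 by blast
qed

lemma mem_convex_hull_rho_remove:
  fixes y :: "real^'n::finite"
  assumes "U \<inter> V = {}" "u \<in> U" "U - {u} \<noteq> {}" "V \<noteq> {}"
    and nonneg: "\<forall>i. 0 \<le> y $ i" and zero: "\<forall>i. i \<notin> U \<union> V \<longrightarrow> y $ i = 0"
    and sum: "\<And>v w. v \<in> V \<Longrightarrow> w \<in> U - {u} \<Longrightarrow> y $ v + y $ w = 1"
    and bound: "\<And>v. v \<in> V \<Longrightarrow> y $ v + y $ u \<le> 1"
  shows "y \<in> convex hull {rho U, rho (U - {u}), rho V}"
proof -
  obtain v0 w0 where v0: "v0 \<in> V" and w0: "w0 \<in> U - {u}" using assms(3,4) by blast
  define \<alpha> \<beta> where "\<alpha> = y $ v0" and "\<beta> = y $ u"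
  have "y $ i = \<beta> * rho U $ i + (1 - \<alpha> - \<beta>) * rho (U - {u}) $ i + \<alpha> * rho V $ i" for i
  proof -
    consider "i = u" | "i \<in> U - {u}" | "i \<in> V" | "i \<notin> U \<union> V" by blast
    thus ?thesis
    proof cases
      case 1 thus ?thesis using assms(1,2) by (auto simp: rho_nth \<beta>_def)
    next
      case 2 thus ?thesis using sum[OF v0 2] assms(1) by (auto simp: rho_nth \<alpha>_def)
    next
      case 3 thus ?thesis using sum[OF 3 w0] sum[OF v0 w0] assms(1,2) by (auto simp: rho_nth \<alpha>_def)
    qed (use zero in \<open>simp add: rho_nth\<close>)
  qed
  hence "y = \<beta> *\<^sub>R rho U + (1 - \<alpha> - \<beta>) *\<^sub>R rho (U - {u}) + \<alpha> *\<^sub>R rho V"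
    by (simp add: vec_eq_iff)
  moreover have "0 \<le> \<alpha>" "0 \<le> \<beta>" "\<alpha> + \<beta> \<le> 1" using nonneg bound[OF v0] by (auto simp: \<alpha>_def \<beta>_def)
  ultimately show ?thesis unfolding convex_hull_3 by force
qed

section \<open>Faces of the order polytope\<close>

lemma poset_ideal_Int: "poset_ideal I \<Longrightarrow> poset_ideal J \<Longrightarrow> poset_ideal (I \<inter> J)"
  and poset_ideal_Un: "poset_ideal I \<Longrightarrow> poset_ideal J \<Longrightarrow> poset_ideal (I \<union> J)"
  by (auto simp: poset_ideal_def)

lemma rho_mem_order_polytope: "poset_ideal I \<Longrightarrow> rho I \<in> order_polytope"
  unfolding order_polytope_def poset_ideal_def by (auto simp: rho_nth)

text \<open>If \<open>D \<union> D' = I \<union> J\<close> and \<open>D \<inter> D' = I \<inter> J\<close>, the segments \<open>[rho D, rho D']\<close> and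
  \<open>[rho I, rho J]\<close> share their midpoint.\<close>
lemma face_of_order_polytope_exchange:
  fixes \<I> :: "'n::{finite,order} set set"
  assumes face: "convex hull (rho ` \<I>) face_of order_polytope" and "finite \<I>"
    and "I \<in> \<I>" "J \<in> \<I>" and ideals: "poset_ideal D" "poset_ideal D'"
    and "D \<union> D' = I \<union> J" "D \<inter> D' = I \<inter> J"
  shows "D \<in> \<I>"
proof -
  have "rho D + rho D' = rho I + rho J"
    unfolding vec_eq_iff
  proof
    fix i
    have "(i \<in> D \<or> i \<in> D') = (i \<in> I \<or> i \<in> J)" "(i \<in> D \<and> i \<in> D') = (i \<in> I \<and> i \<in> J)"
      using assms(7,8) by blast+
    thus "(rho D + rho D') $ i = (rho I + rho J) $ i" by (auto simp: rho_nth)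
  qed
  hence "midpoint (rho D) (rho D') = midpoint (rho I) (rho J)" by (simp add: midpoint_def)
  also have "\<dots> \<in> convex hull (rho ` \<I>)"
    using assms(3,4) by (intro midpoints_in_convex_hull hull_inc) auto
  finally have mid: "midpoint (rho D) (rho D') \<in> convex hull (rho ` \<I>)" .
  have "rho D \<in> convex hull (rho ` \<I>)"
  proof (cases "D = D'")
    case True thus ?thesis using mid by simp
  next
    case False
    hence "midpoint (rho D) (rho D') \<in> open_segment (rho D) (rho D')"
      by (simp add: midpoint_in_open_segment)
    thus ?thesis using face_ofD[OF face _ _ _ mid] rho_mem_order_polytope ideals by blast
  qed
  thus ?thesis using rho_mem_convex_hull_rho \<open>finite \<I>\<close> by blast
qed

lemma face_of_order_polytope_Int_Un:
  fixes \<I> :: "'n::{finite,order} set set"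
  assumes "convex hull (rho ` \<I>) face_of order_polytope" "finite \<I>"
    and "I \<in> \<I>" "J \<in> \<I>" "poset_ideal I" "poset_ideal J"
  shows "I \<inter> J \<in> \<I>" "I \<union> J \<in> \<I>"
  using face_of_order_polytope_exchange[OF assms(1-4)] assms(5,6)
  by (auto intro: poset_ideal_Int poset_ideal_Un)

lemma face_of_order_polytope_insert:
  fixes \<I> :: "'n::{finite,order} set set"
  assumes face: "convex hull (rho ` \<I>) face_of order_polytope" and "finite \<I>"
    and P: "P \<in> \<I>" "poset_ideal P" and Q: "Q \<in> \<I>" "poset_ideal Q" and "P \<subseteq> Q"
    and gap: "poset_antichain (Q - P)" and x: "x \<in> Q" "x \<notin> P"
  shows "insert x P \<in> \<I>"
proof (rule face_of_order_polytope_exchange[OF face \<open>finite \<I>\<close> P(1) Q(1)])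
  show "poset_ideal (insert x P)" unfolding poset_ideal_def
  proof (intro allI impI)
    fix z y assume "z \<in> insert x P" "y \<le> z"
    moreover have "y \<in> P" if "y \<le> x" "y \<noteq> x"
      using that gap x Q(2) unfolding poset_ideal_def poset_antichain_def by blast
    ultimately show "y \<in> insert x P" using P(2) unfolding poset_ideal_def by blast
  qed
  show "poset_ideal (Q - {x})" unfolding poset_ideal_def
  proof (intro allI impI)
    fix z y assume z: "z \<in> Q - {x}" and "y \<le> z"
    moreover have "y \<noteq> x"
    proof
      assume "y = x"
      hence "z \<notin> P" using \<open>y \<le> z\<close> x(2) P(2) unfolding poset_ideal_def by blast
      thus False using gap z x \<open>y \<le> z\<close> \<open>y = x\<close> unfolding poset_antichain_def by blast
    qed
    ultimately show "y \<in> Q - {x}" using Q(2) unfolding poset_ideal_def by blast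
  qed
qed (use \<open>P \<subseteq> Q\<close> x in auto)

lemma face_of_order_polytope_gap_singleton:
  fixes \<I> :: "'n::{finite,order} set set"
  assumes face: "convex hull (rho ` \<I>) face_of order_polytope" and "finite \<I>"
    and "P \<in> \<I>" "Q \<in> \<I>" "poset_ideal P" "poset_ideal Q" "P \<subset> Q" "poset_antichain (Q - P)"
    and adjacent: "\<forall>X\<in>\<I>. P \<subset> X \<longrightarrow> X \<subseteq> Q \<longrightarrow> X = Q"
  obtains x where "Q - P = {x}"
proof -
  obtain x where x: "x \<in> Q" "x \<notin> P" using \<open>P \<subset> Q\<close> by blast
  hence "insert x P \<in> \<I>" using assms by (intro face_of_order_polytope_insert[OF face]) auto
  hence "insert x P = Q" using adjacent x \<open>P \<subset> Q\<close> by blast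
  thus thesis using that[of x] x by blast
qed

lemma face_of_order_polytope_bottom_singleton:
  fixes M N :: "'n::{finite,order} set"
  assumes face: "convex hull (rho ` {{}, M, N}) face_of order_polytope"
    and "poset_ideal M" "poset_ideal N" "M \<noteq> {}" "M \<subset> N" "poset_antichain M"
  shows "card M = 1"
proof -
  have "poset_ideal {}" by (simp add: poset_ideal_def)
  obtain x where "M - {} = {x}"
    by (rule face_of_order_polytope_gap_singleton[OF face, where P = "{}" and Q = M])
      (use assms \<open>poset_ideal {}\<close> in auto)
  thus ?thesis by simp
qed

section \<open>Faces of the chain polytope\<close>

lemma card_chain_Int_antichain:
  fixes A C :: "'n::{finite,order} set"
  assumes "poset_antichain A" "poset_chain C"
  shows "card (C \<inter> A) \<le> 1"
proof -
  have "\<forall>x\<in>C \<inter> A. \<forall>y\<in>C \<inter> A. x = y"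
    using assms unfolding poset_antichain_def poset_chain_def by blast
  thus ?thesis by (simp add: card_le_Suc0_iff_eq)
qed

lemma sum_rho: "(\<Sum>i\<in>C. rho A $ i) = real (card (C \<inter> A))"
  by (simp add: rho_nth sum.If_cases)

lemma rho_mem_chain_polytope:
  fixes A :: "'n::{finite,order} set"
  assumes "poset_antichain A"
  shows "rho A \<in> chain_polytope"
proof -
  have "(\<Sum>i\<in>C. rho A $ i) \<le> 1" if "poset_chain C" for C
    using card_chain_Int_antichain[OF assms that] by (simp add: sum_rho)
  thus ?thesis unfolding chain_polytope_def by (auto simp: rho_nth)
qed

lemma convex_chain_polytope: "convex chain_polytope"
  unfolding chain_polytope_def convex_def
proof (safe)
  fix x y :: "real^'n::{finite,order}" and u v :: real and i :: 'n and C :: "'n set"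
  assume h: "\<forall>i. 0 \<le> x $ i" "\<forall>C. poset_chain C \<longrightarrow> (\<Sum>i\<in>C. x $ i) \<le> 1"
    "\<forall>i. 0 \<le> y $ i" "\<forall>C. poset_chain C \<longrightarrow> (\<Sum>i\<in>C. y $ i) \<le> 1"
    "0 \<le> u" "0 \<le> v" "u + v = 1"
  show "0 \<le> (u *\<^sub>R x + v *\<^sub>R y) $ i" using h by simp
  assume "poset_chain C"
  hence "u * (\<Sum>i\<in>C. x $ i) + v * (\<Sum>i\<in>C. y $ i) \<le> u * 1 + v * 1"
    using h by (intro add_mono mult_left_mono) auto
  thus "(\<Sum>i\<in>C. (u *\<^sub>R x + v *\<^sub>R y) $ i) \<le> 1"
    using h by (simp add: sum.distrib sum_distrib_left)
qed

text \<open>Each constraint \<open>y$i = 0\<close> or \<open>\<Sum>i\<in>c. y$i = 1\<close> makes a valid inequality of the chain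
  polytope tight, so the points satisfying all of them form a face.\<close>
lemma chain_polytope_face_of_tight:
  fixes X :: "'n::{finite,order} set"
  assumes chains: "\<forall>c\<in>Ch. poset_chain c"
    and vertices: "\<And>A. A \<in> \<A> \<Longrightarrow> poset_antichain A \<and> A \<subseteq> X \<and> (\<forall>c\<in>Ch. card (c \<inter> A) = 1)"
    and spanned: "\<And>y. y \<in> chain_polytope \<Longrightarrow> \<forall>i. i \<notin> X \<longrightarrow> y$i = 0 \<Longrightarrow>
        \<forall>c\<in>Ch. (\<Sum>i\<in>c. y$i) = 1 \<Longrightarrow> y \<in> convex hull (rho ` \<A>)"
  shows "convex hull (rho ` \<A>) face_of chain_polytope"
proof -
  let ?P = "chain_polytope :: (real^'n::{finite,order}) set"
  let ?F = "{y \<in> ?P. (\<forall>i. i \<notin> X \<longrightarrow> y$i = 0) \<and> (\<forall>c\<in>Ch. (\<Sum>i\<in>c. y$i) = 1)}"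
  define zero_faces where "zero_faces = (\<lambda>i. ?P \<inter> {y. (- axis i 1) \<bullet> y = 0}) ` (- X)"
  define chain_faces where "chain_faces = (\<lambda>c. ?P \<inter> {y. (\<Sum>i\<in>c. axis i 1) \<bullet> y = 1}) ` Ch"
  have coord: "(\<Sum>i\<in>c. axis i 1) \<bullet> y = (\<Sum>i\<in>c. y$i)" for c and y :: "real^'n::{finite,order}"
    by (simp add: inner_sum_left inner_commute[of "axis _ 1"] inner_axis)
  have hyperplane: "?P \<inter> {y. a \<bullet> y = b} face_of ?P" if "\<And>y. y \<in> ?P \<Longrightarrow> a \<bullet> y \<le> b" for a b
    by (rule face_of_Int_supporting_hyperplane_le[OF convex_chain_polytope that])
  have "\<Inter> (insert ?P (zero_faces \<union> chain_faces)) face_of ?P"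
  proof (rule face_of_Inter)
    fix T assume "T \<in> insert ?P (zero_faces \<union> chain_faces)"
    moreover have "?P \<inter> {y. (- axis i 1) \<bullet> y = 0} face_of ?P" for i
      by (rule hyperplane) (simp add: inner_axis' chain_polytope_def)
    moreover have "?P \<inter> {y. (\<Sum>i\<in>c. axis i 1) \<bullet> y = 1} face_of ?P" if "c \<in> Ch" for c
      by (rule hyperplane) (use chains that in \<open>simp add: coord chain_polytope_def\<close>)
    ultimately show "T face_of ?P" unfolding zero_faces_def chain_faces_def
      by (auto intro: face_of_refl convex_chain_polytope)
  qed simp
  also have "\<Inter> (insert ?P (zero_faces \<union> chain_faces)) = ?F"
    unfolding zero_faces_def chain_faces_def by (auto simp: coord inner_axis')
  finally have F: "?F face_of ?P" .
  have "rho A \<in> ?F" if "A \<in> \<A>" for A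
    using vertices[OF that] rho_mem_chain_polytope by (simp add: sum_rho) (auto simp: rho_nth)
  hence "convex hull (rho ` \<A>) \<subseteq> ?F"
    by (intro hull_minimal) (auto intro: face_of_imp_convex[OF F])
  moreover have "?F \<subseteq> convex hull (rho ` \<A>)" using spanned by blast
  ultimately have "convex hull (rho ` \<A>) = ?F" by (rule subset_antisym)
  thus ?thesis using F by simp
qed

lemma chain_polytope_nonneg: "y \<in> chain_polytope \<Longrightarrow> 0 \<le> y $ i"
  and chain_polytope_sum_le: "y \<in> chain_polytope \<Longrightarrow> poset_chain C \<Longrightarrow> (\<Sum>i\<in>C. y $ i) \<le> 1"
  by (auto simp: chain_polytope_def)

lemma is_k_face_edge_rho:
  fixes A B :: "'n::finite set"
  assumes "convex hull {rho A, rho B} face_of Q" "A \<noteq> B"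
  shows "is_k_face Q 1 (convex hull {rho A, rho B})"
  using assms aff_dim_convex_hull_rho2 by (simp add: is_k_face_def)

lemma Delta_C_intro:
  fixes A B C :: "'n::{finite,order} set"
  assumes "poset_antichain A" "poset_antichain B" "poset_antichain C" "A \<noteq> B" "B \<noteq> C" "A \<noteq> C"
    and "convex hull {rho A, rho B, rho C} face_of chain_polytope"
  shows "{A, B, C} \<in> Delta_C"
  using assms aff_dim_convex_hull_rho3[of A B C] unfolding Delta_C_def is_k_face_def by blast

lemma Deltastar_C_intro:
  "Z \<in> Delta_C \<Longrightarrow> A \<in> Z \<Longrightarrow> B \<in> Z \<Longrightarrow> A \<noteq> B \<Longrightarrow> {A, B} \<in> Estar_C \<Longrightarrow> Z \<in> Deltastar_C"
  unfolding Deltastar_C_def by blast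

lemma Diff_singleton_nonempty_if_card_ge_2:
  assumes "2 \<le> card S"
  shows "S - {x} \<noteq> {}"
proof
  assume "S - {x} = {}"
  hence "card S \<le> card {x}" by (intro card_mono) auto
  thus False using assms by simp
qed

lemma card_le_if_cover_and_injection:
  assumes "A \<subseteq> f ` X" "inj_on g X" "g ` X \<subseteq> B" "finite B"
  shows "card A \<le> card B"
proof -
  have "f ` X = (f \<circ> the_inv_into X g) ` (g ` X)"
    using assms(2) by (simp add: image_comp the_inv_into_f_f cong: image_cong)
  moreover have fin: "finite (g ` X)" using assms(3,4) finite_subset by blast
  ultimately have "card A \<le> card ((f \<circ> the_inv_into X g) ` (g ` X))"
    using assms(1) by (intro card_mono) auto
  also have "\<dots> \<le> card (g ` X)" using fin by (rule card_image_le)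
  also have "\<dots> \<le> card B" using assms(3,4) by (rule card_mono[rotated])
  finally show ?thesis .
qed

text \<open>A maximal ranked poset is the ordinal sum of its rank levels.\<close>
locale ranked_ordinal_sum =
  fixes r :: "'n::{finite,order} \<Rightarrow> nat"
  assumes less_iff_rank_less: "x < y \<longleftrightarrow> r x < r y"
    and rank_attained: "j \<le> r x \<Longrightarrow> \<exists>y. r y = j"
begin

definition level :: "nat \<Rightarrow> 'n set" where "level k = {x. r x = k}"

definition below :: "nat \<Rightarrow> 'n set" where "below k = {x. r x < k}"

lemma le_iff_rank: "x \<le> y \<longleftrightarrow> x = y \<or> r x < r y"
  using less_iff_rank_less[of x y] by (auto simp: order_le_less)

lemma level_nonempty: "S \<subseteq> level m \<Longrightarrow> S \<noteq> {} \<Longrightarrow> j \<le> m \<Longrightarrow> level j \<noteq> {}"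
  using rank_attained by (fastforce simp: level_def)

lemma level_unique: "Y \<subseteq> level a \<Longrightarrow> Y \<subseteq> level b \<Longrightarrow> Y \<noteq> {} \<Longrightarrow> a = b"
  by (auto simp: level_def)

lemma poset_chain_iff: "poset_chain C \<longleftrightarrow> (\<forall>x\<in>C. \<forall>y\<in>C. r x = r y \<longrightarrow> x = y)"
  unfolding poset_chain_def le_iff_rank by (metis nat_neq_iff)

lemma poset_antichain_level: "A \<subseteq> level k \<Longrightarrow> poset_antichain A"
  by (auto simp: poset_antichain_def le_iff_rank level_def subset_iff)

lemma poset_ideal_iff: "poset_ideal I \<longleftrightarrow> (\<forall>x\<in>I. \<forall>y. r y < r x \<longrightarrow> y \<in> I)"
  unfolding poset_ideal_def le_iff_rank by blast

lemma poset_ideal_below_Un: "S \<subseteq> level m \<Longrightarrow> poset_ideal (below m \<union> S)"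
  by (auto simp: poset_ideal_iff level_def below_def)

lemma below_Suc: "below (Suc j) = below j \<union> level j"
  by (auto simp: below_def level_def)

lemma maxs_below_Un: "S \<subseteq> level m \<Longrightarrow> S \<noteq> {} \<Longrightarrow> maxs (below m \<union> S) = S"
  unfolding maxs_def le_iff_rank by (auto simp: level_def below_def subset_iff)

lemma down_closure_level: "S \<subseteq> level m \<Longrightarrow> S \<noteq> {} \<Longrightarrow> down_closure S = below m \<union> S"
  unfolding down_closure_def le_iff_rank by (auto simp: level_def below_def)

lemma poset_ideal_decompose:
  assumes "poset_ideal I" "I \<noteq> {}"
  obtains m S where "S \<subseteq> level m" "S \<noteq> {}" "I = below m \<union> S"
proof -
  define m where "m = Max (r ` I)"
  have "m \<in> r ` I" unfolding m_def using assms(2) by (intro Max_in) auto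
  then obtain y where y: "y \<in> I" "r y = m" by auto
  have "below m \<subseteq> I" using assms(1) y unfolding poset_ideal_iff below_def by blast
  moreover have "r x \<le> m" if "x \<in> I" for x unfolding m_def using that by simp
  ultimately have "I = below m \<union> (I \<inter> level m)" by (force simp: below_def level_def)
  moreover have "I \<inter> level m \<noteq> {}" using y by (auto simp: level_def)
  ultimately show thesis using that[of "I \<inter> level m" m] by blast
qed

lemma below_Un_eq_iff:
  assumes "S \<subseteq> level m" "S \<noteq> {}" "S' \<subseteq> level m'" "S' \<noteq> {}"
  shows "below m \<union> S = below m' \<union> S' \<longleftrightarrow> m = m' \<and> S = S'"
  using maxs_below_Un[OF assms(1,2)] maxs_below_Un[OF assms(3,4)] level_unique assms by metis

lemma below_Un_subset:
  assumes "R \<subseteq> level k" "R \<noteq> {}" "S \<subseteq> level m" "below k \<union> R \<subseteq> below m \<union> S"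
  shows "k \<le> m" "k = m \<Longrightarrow> R \<subseteq> S"
proof -
  obtain x where "x \<in> R" using assms(2) by blast
  hence "x \<in> below m \<union> S" "r x = k" using assms(1,4) by (auto simp: level_def)
  thus "k \<le> m" using assms(3) by (auto simp: below_def level_def)
  show "R \<subseteq> S" if "k = m" using that assms by (auto simp: below_def level_def)
qed

lemma chain_polytope_edge_insert:
  assumes S: "S \<subseteq> level m" and x: "x \<in> level m" "x \<notin> S"
  shows "is_k_face chain_polytope 1 (convex hull {rho S, rho (insert x S)})"
proof -
  have "convex hull (rho ` {S, insert x S}) face_of chain_polytope"
  proof (rule chain_polytope_face_of_tight[where X = "insert x S" and Ch = "(\<lambda>s. {s}) ` S"],
      goal_cases)
    case 1 show ?case by (simp add: poset_chain_def)
  next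
    case (2 A) thus ?case using S x by (auto intro: poset_antichain_level)
  next
    case (3 y)
    define t where "t = y $ x"
    have "t \<le> 1" using chain_polytope_sum_le[OF 3(1), of "{x}"] by (simp add: t_def poset_chain_def)
    moreover have "0 \<le> t" using chain_polytope_nonneg[OF 3(1)] by (simp add: t_def)
    moreover have "y = (1 - t) *\<^sub>R rho S + t *\<^sub>R rho (insert x S)"
      using 3 x(2) by (auto simp: vec_eq_iff rho_nth t_def)
    ultimately show ?case unfolding image_insert image_empty convex_hull_2 by force
  qed
  thus ?thesis using x by (intro is_k_face_edge_rho) auto
qed

lemma chain_polytope_edge_levels:
  assumes U: "U \<subseteq> level a" "U \<noteq> {}" and V: "V \<subseteq> level b" "V \<noteq> {}" and "a \<noteq> b"
  shows "is_k_face chain_polytope 1 (convex hull {rho U, rho V})"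
proof -
  have rank_ne: "r u \<noteq> r v" if "u \<in> U" "v \<in> V" for u v
    using that U V \<open>a \<noteq> b\<close> by (auto simp: level_def)
  hence disj: "U \<inter> V = {}" by blast
  have "convex hull (rho ` {U, V}) face_of chain_polytope"
  proof (rule chain_polytope_face_of_tight
      [where X = "U \<union> V" and Ch = "{{u, v} | u v. u \<in> U \<and> v \<in> V}"], goal_cases)
    case 1 show ?case using rank_ne by (fastforce simp: poset_chain_iff)
  next
    case (2 A)
    have "card ({u, v} \<inter> U) = 1 \<and> card ({u, v} \<inter> V) = 1" if "u \<in> U" "v \<in> V" for u v
    proof -
      have "{u, v} \<inter> U = {u}" "{u, v} \<inter> V = {v}" using that disj by auto
      thus ?thesis by simp
    qed
    thus ?case using 2 U V by (auto intro: poset_antichain_level)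
  next
    case (3 y)
    have "y $ u + y $ v = 1" if "u \<in> U" "v \<in> V" for u v
    proof -
      have "(\<Sum>i\<in>{u, v}. y $ i) = 1" using 3(3) that by blast
      moreover have "u \<noteq> v" using that disj by blast
      ultimately show ?thesis by simp
    qed
    thus ?case using mem_convex_hull_rho2[OF disj U(2) V(2)] 3(2) chain_polytope_nonneg[OF 3(1)]
      by simp
  qed
  moreover have "U \<noteq> V" using U(2) disj by blast
  ultimately show ?thesis by (intro is_k_face_edge_rho) simp_all
qed

lemma chain_polytope_triangle_levels:
  assumes U: "U \<subseteq> level a" "U \<noteq> {}" and V: "V \<subseteq> level b" "V \<noteq> {}"
    and W: "W \<subseteq> level c" "W \<noteq> {}" and "a \<noteq> b" "a \<noteq> c" "b \<noteq> c"
  shows "{U, V, W} \<in> Delta_C"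
proof -
  have ranks: "\<And>u. u \<in> U \<Longrightarrow> r u = a" "\<And>v. v \<in> V \<Longrightarrow> r v = b" "\<And>w. w \<in> W \<Longrightarrow> r w = c"
    using U V W by (auto simp: level_def)
  hence disj: "U \<inter> V = {}" "U \<inter> W = {}" "V \<inter> W = {}"
    using \<open>a \<noteq> b\<close> \<open>a \<noteq> c\<close> \<open>b \<noteq> c\<close> by fastforce+
  have "convex hull (rho ` {U, V, W}) face_of chain_polytope"
  proof (rule chain_polytope_face_of_tight[where X = "U \<union> V \<union> W"
        and Ch = "{{u, v, w} | u v w. u \<in> U \<and> v \<in> V \<and> w \<in> W}"], goal_cases)
    case 1 show ?case using ranks \<open>a \<noteq> b\<close> \<open>a \<noteq> c\<close> \<open>b \<noteq> c\<close>
      by (fastforce simp: poset_chain_iff)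
  next
    case (2 A)
    have "card ({u, v, w} \<inter> U) = 1 \<and> card ({u, v, w} \<inter> V) = 1 \<and> card ({u, v, w} \<inter> W) = 1"
      if "u \<in> U" "v \<in> V" "w \<in> W" for u v w
    proof -
      have "{u, v, w} \<inter> U = {u}" "{u, v, w} \<inter> V = {v}" "{u, v, w} \<inter> W = {w}"
        using that disj by auto
      thus ?thesis by simp
    qed
    thus ?case using 2 U V W by (auto intro: poset_antichain_level)
  next
    case (3 y)
    have "y $ u + y $ v + y $ w = 1" if "u \<in> U" "v \<in> V" "w \<in> W" for u v w
    proof -
      have "(\<Sum>i\<in>{u, v, w}. y $ i) = 1" using 3(3) that by blast
      moreover have "u \<noteq> v" "u \<noteq> w" "v \<noteq> w" using that disj by blast+
      ultimately show ?thesis by (simp add: add.assoc)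
    qed
    thus ?case using mem_convex_hull_rho3[OF disj U(2) V(2) W(2)] 3(2)
        chain_polytope_nonneg[OF 3(1)] by simp
  qed
  moreover have "U \<noteq> V" "V \<noteq> W" "U \<noteq> W" using U(2) V(2) disj by blast+
  ultimately show ?thesis using U V W by (intro Delta_C_intro poset_antichain_level) simp_all
qed

lemma chain_polytope_triangle_remove:
  assumes U: "U \<subseteq> level a" "u \<in> U" "U - {u} \<noteq> {}" and V: "V \<subseteq> level b" "V \<noteq> {}"
    and "a \<noteq> b"
  shows "{U, U - {u}, V} \<in> Delta_C"
proof -
  have rank_ne: "r v \<noteq> r w" if "v \<in> V" "w \<in> U" for v w
  proof -
    have "r v = b" "r w = a" using that U(1) V(1) by (auto simp: level_def)
    thus ?thesis using \<open>a \<noteq> b\<close> by simp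
  qed
  hence disj: "U \<inter> V = {}" by blast
  have "convex hull (rho ` {U, U - {u}, V}) face_of chain_polytope"
  proof (rule chain_polytope_face_of_tight
      [where X = "U \<union> V" and Ch = "{{v, w} | v w. v \<in> V \<and> w \<in> U - {u}}"], goal_cases)
    case 1 show ?case using rank_ne by (fastforce simp: poset_chain_iff)
  next
    case (2 A)
    have "card ({v, w} \<inter> U) = 1 \<and> card ({v, w} \<inter> (U - {u})) = 1 \<and> card ({v, w} \<inter> V) = 1"
      if "v \<in> V" "w \<in> U - {u}" for v w
    proof -
      have "{v, w} \<inter> U = {w}" "{v, w} \<inter> (U - {u}) = {w}" "{v, w} \<inter> V = {v}"
        using that disj by auto
      thus ?thesis by simp
    qed
    thus ?case using 2 U V by (auto intro: poset_antichain_level)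
  next
    case (3 y)
    have "y $ v + y $ w = 1" if "v \<in> V" "w \<in> U - {u}" for v w
    proof -
      have "(\<Sum>i\<in>{v, w}. y $ i) = 1" using 3(3) that by blast
      moreover have "v \<noteq> w" using that disj by blast
      ultimately show ?thesis by simp
    qed
    moreover have "y $ v + y $ u \<le> 1" if "v \<in> V" for v
    proof -
      have "poset_chain {v, u}" using rank_ne[OF that U(2)] by (auto simp: poset_chain_iff)
      moreover have "v \<noteq> u" using that U(2) disj by blast
      ultimately show ?thesis using chain_polytope_sum_le[OF 3(1)] by fastforce
    qed
    ultimately show ?case using mem_convex_hull_rho_remove[OF disj U(2,3) V(2)] 3(2)
        chain_polytope_nonneg[OF 3(1)] by simp
  qed
  moreover have "U \<noteq> U - {u}" "U - {u} \<noteq> V" "U \<noteq> V" using U V disj by blast+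
  ultimately show ?thesis using U V by (intro Delta_C_intro poset_antichain_level) auto
qed

lemma Estar_C_level_pair:
  assumes "1 \<le> j" and V: "V \<subseteq> level j" "2 \<le> card V"
  shows "{level (j - 1), V} \<in> Estar_C"
proof -
  have "V \<noteq> {}" using V(2) by auto
  hence L: "level (j - 1) \<noteq> {}" using level_nonempty[OF V(1)] by simp
  have below_j: "down_closure (level (j - 1)) = below j"
    using down_closure_level[OF order_refl L] below_Suc[of "j - 1"] \<open>1 \<le> j\<close> by simp
  have "level (j - 1) \<noteq> V"
    using level_unique[of V "j - 1" j] V(1) \<open>V \<noteq> {}\<close> \<open>1 \<le> j\<close> by auto
  moreover have "is_k_face chain_polytope 1 (convex hull {rho (level (j - 1)), rho V})"
    using L V(1) \<open>V \<noteq> {}\<close> \<open>1 \<le> j\<close> by (intro chain_polytope_edge_levels) auto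
  moreover have "\<not> is_k_face order_polytope 1 (convex hull {rho (below j), rho (below j \<union> V)})"
  proof
    assume "is_k_face order_polytope 1 (convex hull {rho (below j), rho (below j \<union> V)})"
    hence face: "convex hull (rho ` {below j, below j \<union> V}) face_of order_polytope"
      by (simp add: is_k_face_def)
    have gap: "below j \<union> V - below j = V" using V(1) by (auto simp: below_def level_def)
    obtain x where "below j \<union> V - below j = {x}"
      by (rule face_of_order_polytope_gap_singleton[OF face, where P = "below j" and Q = "below j \<union> V"])
        (use poset_ideal_below_Un[of "{}" j] poset_ideal_below_Un[OF V(1)]
          poset_antichain_level[OF V(1)] \<open>V \<noteq> {}\<close> gap in auto)
    thus False using V(2) gap by simp
  qed
  ultimately show ?thesis
    unfolding Estar_C_def using poset_antichain_level[OF order_refl] poset_antichain_level[OF V(1)]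
      below_j down_closure_level[OF V(1) \<open>V \<noteq> {}\<close>]
    by (intro CollectI exI[of _ "level (j - 1)"] exI[of _ V]) simp
qed

definition wide_ideal :: "'n set \<Rightarrow> bool" where
  "wide_ideal J \<longleftrightarrow> (\<exists>m S. 1 \<le> m \<and> S \<subseteq> level m \<and> 2 \<le> card S \<and> J = below m \<union> S)"

lemma wide_ideal_below_Un_iff:
  assumes "S \<subseteq> level m" "S \<noteq> {}"
  shows "wide_ideal (below m \<union> S) \<longleftrightarrow> 1 \<le> m \<and> 2 \<le> card S"
proof
  assume "wide_ideal (below m \<union> S)"
  then obtain m' S' where "1 \<le> m'" "S' \<subseteq> level m'" "2 \<le> card S'" "below m \<union> S = below m' \<union> S'"
    unfolding wide_ideal_def by blast
  moreover from this have "S' \<noteq> {}" by auto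
  ultimately show "1 \<le> m \<and> 2 \<le> card S" using below_Un_eq_iff[OF assms] by blast
qed (use assms in \<open>auto simp: wide_ideal_def\<close>)

lemma chain_polytope_edge_maxs_empty:
  assumes J: "poset_ideal J" "J \<noteq> {}" "\<not> wide_ideal J"
    and face: "convex hull (rho ` {{}, J}) face_of order_polytope"
  shows "is_k_face chain_polytope 1 (convex hull {rho (maxs {}), rho (maxs J)})"
proof -
  obtain m S where S: "S \<subseteq> level m" "S \<noteq> {}" "J = below m \<union> S"
    by (rule poset_ideal_decompose[OF J(1,2)])
  have "card S = 1"
  proof (cases "m = 0")
    case True
    hence "J = S" using S(3) by (simp add: below_def)
    obtain x where "J - {} = {x}"
      by (rule face_of_order_polytope_gap_singleton[OF face, where P = "{}" and Q = J])
        (use J(1,2) \<open>J = S\<close> poset_antichain_level[OF S(1)] in \<open>auto simp: poset_ideal_def\<close>)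
    thus ?thesis using \<open>J = S\<close> by simp
  next
    case False
    hence "\<not> 2 \<le> card S" using J(3) wide_ideal_below_Un_iff[OF S(1,2)] S(3) by auto
    moreover have "1 \<le> card S" using S(2) by (simp add: Suc_le_eq card_gt_0_iff)
    ultimately show ?thesis by linarith
  qed
  then obtain y where "S = {y}" by (rule card_1_singletonE)
  hence "is_k_face chain_polytope 1 (convex hull {rho {}, rho (insert y {})})"
    using S(1) by (intro chain_polytope_edge_insert[of "{}" m]) auto
  thus ?thesis using maxs_below_Un[OF S(1,2)] S(3) \<open>S = {y}\<close> by (simp add: maxs_def)
qed

lemma chain_polytope_edge_maxs_nonempty:
  fixes I J :: "'n set"
  assumes I: "poset_ideal I" "I \<noteq> {}" and J: "poset_ideal J" and "I \<subset> J"
    and face: "convex hull (rho ` {I, J}) face_of order_polytope"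
  shows "is_k_face chain_polytope 1 (convex hull {rho (maxs I), rho (maxs J)})"
proof -
  obtain k R where R: "R \<subseteq> level k" "R \<noteq> {}" "I = below k \<union> R"
    by (rule poset_ideal_decompose[OF I])
  have "J \<noteq> {}" using \<open>I \<subset> J\<close> by blast
  then obtain m S where S: "S \<subseteq> level m" "S \<noteq> {}" "J = below m \<union> S"
    by (rule poset_ideal_decompose[OF J])
  have sub: "below k \<union> R \<subseteq> below m \<union> S" using \<open>I \<subset> J\<close> R(3) S(3) by blast
  have maxs: "maxs I = R" "maxs J = S" using maxs_below_Un R S by simp_all
  show ?thesis
  proof (cases "k = m")
    case True
    hence gap: "J - I = S - R" "R \<subseteq> S"
      using R S below_Un_subset(2)[OF R(1,2) S(1) sub] by (auto simp: below_def level_def)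
    obtain x where "J - I = {x}"
      by (rule face_of_order_polytope_gap_singleton[OF face, where P = I and Q = J])
        (use I(1) J \<open>I \<subset> J\<close> poset_antichain_level[of "S - R" m] S(1) gap in auto)
    hence "S = insert x R" "x \<in> level m" "x \<notin> R" using gap S(1) by auto
    thus ?thesis using maxs R(1) True chain_polytope_edge_insert by simp
  next
    case False
    thus ?thesis using chain_polytope_edge_levels[OF R(1,2) S(1,2)] maxs by simp
  qed
qed

lemma Estar_O_memD:
  assumes "E \<in> Estar_O"
  obtains J where "E = {{}, J}" "wide_ideal J"
proof -
  obtain I J where E: "E = {I, J}" "poset_ideal I" "poset_ideal J" "I \<noteq> J"
    and face: "convex hull (rho ` {I, J}) face_of order_polytope"
    and not_edge: "\<not> is_k_face chain_polytope 1 (convex hull {rho (maxs I), rho (maxs J)})"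
    using assms unfolding Estar_O_def is_k_face_def by auto
  have "I \<inter> J \<in> {I, J}" using face_of_order_polytope_Int_Un(1)[OF face _ _ _ E(2,3)] by simp
  hence "I \<subset> J \<or> J \<subset> I" using E(4) by blast
  have nested: "I' = {} \<and> wide_ideal J'"
    if "poset_ideal I'" "poset_ideal J'" "I' \<subset> J'"
      "convex hull (rho ` {I', J'}) face_of order_polytope"
      "\<not> is_k_face chain_polytope 1 (convex hull {rho (maxs I'), rho (maxs J')})" for I' J'
  proof
    show "I' = {}" using chain_polytope_edge_maxs_nonempty[OF that(1) _ that(2-4)] that(5) by blast
    hence "J' \<noteq> {}" "convex hull (rho ` {{}, J'}) face_of order_polytope"
      using that(3,4) by auto
    thus "wide_ideal J'" using chain_polytope_edge_maxs_empty[OF that(2)] that(5) \<open>I' = {}\<close> by blast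
  qed
  from \<open>I \<subset> J \<or> J \<subset> I\<close> show thesis
  proof
    assume "I \<subset> J"
    hence "I = {} \<and> wide_ideal J" using nested E(2,3) face not_edge by blast
    thus thesis using that E(1) by blast
  next
    assume "J \<subset> I"
    moreover have "convex hull (rho ` {J, I}) face_of order_polytope"
      "\<not> is_k_face chain_polytope 1 (convex hull {rho (maxs J), rho (maxs I)})"
      using face not_edge by (simp_all add: insert_commute)
    ultimately have "J = {}" "wide_ideal I" using nested E(2,3) by blast+
    moreover have "E = {{}, I}" using E(1) \<open>J = {}\<close> by auto
    ultimately show thesis using that by blast
  qed
qed

lemma Deltastar_O_shape:
  assumes "T \<in> Deltastar_O"
  obtains M N where "T = {{}, M, N}" "poset_ideal M" "poset_ideal N" "M \<noteq> {}" "M \<subset> N"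
    "convex hull (rho ` T) face_of order_polytope" "wide_ideal M \<or> wide_ideal N"
proof -
  have "T \<in> Delta_O" using assms unfolding Deltastar_O_def by simp
  then obtain I J K where T: "T = {I, J, K}" "poset_ideal I" "poset_ideal J" "poset_ideal K"
      "I \<noteq> J" "J \<noteq> K" "I \<noteq> K"
    and "is_k_face order_polytope 2 (convex hull {rho I, rho J, rho K})"
    unfolding Delta_O_def by blast
  hence face: "convex hull (rho ` T) face_of order_polytope" by (simp add: is_k_face_def)
  obtain A B where AB: "A \<in> T" "B \<in> T" "{A, B} \<in> Estar_O"
    using assms unfolding Deltastar_O_def by blast
  obtain W where "{A, B} = {{}, W}" "wide_ideal W" by (rule Estar_O_memD[OF AB(3)])
  hence W: "{} \<in> T" "W \<in> T" "W \<noteq> {}" "wide_ideal W"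
    using AB(1,2) by (auto simp: doubleton_eq_iff wide_ideal_def)
  from W(1) T(1) consider "I = {}" | "J = {}" | "K = {}" by auto
  then obtain P Q where PQ: "T = {{}, P, Q}" "P \<noteq> {}" "Q \<noteq> {}" "P \<noteq> Q"
  proof cases
    case 1 thus thesis using that[of J K] T by auto
  next
    case 2 thus thesis using that[of I K] T by (auto simp: insert_commute)
  next
    case 3 thus thesis using that[of I J] T by (auto simp: insert_commute)
  qed
  have "\<forall>X\<in>T. poset_ideal X" using T(1-4) by blast
  hence ideal: "poset_ideal P" "poset_ideal Q" using PQ(1) by auto
  have "W = P \<or> W = Q" using W(2,3) PQ(1) by auto
  hence wide: "wide_ideal P \<or> wide_ideal Q" using W(4) by blast
  have "P \<union> Q \<in> T" using face_of_order_polytope_Int_Un(2)[OF face _ _ _ ideal] PQ(1) by simp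
  hence "P \<subset> Q \<or> Q \<subset> P" using PQ by auto
  thus thesis
  proof
    assume "P \<subset> Q" thus thesis using that PQ ideal face wide by blast
  next
    assume "Q \<subset> P"
    moreover have "T = {{}, Q, P}" using PQ(1) by auto
    ultimately show thesis using that[of Q P] PQ ideal face wide by blast
  qed
qed

section \<open>An injection of \<open>Deltastar_O\<close> into \<open>Deltastar_C\<close>\<close>

text \<open>The triangle \<open>{{}, below k \<union> R, below m \<union> S}\<close> of \<open>Deltastar_O\<close> is encoded by
  \<open>(k, R, m, S)\<close>; the three disjuncts are the three cases of \<open>triangle_image\<close>.\<close>
definition admissible :: "nat \<Rightarrow> 'n set \<Rightarrow> nat \<Rightarrow> 'n set \<Rightarrow> bool" where
  "admissible k R m S \<longleftrightarrow> R \<subseteq> level k \<and> R \<noteq> {} \<and> S \<subseteq> level m \<and> S \<noteq> {} \<and>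
     (2 \<le> card S \<and> 1 \<le> m \<and> (k + 2 \<le> m \<or> k = m \<and> (\<exists>x\<in>S. R = S - {x})) \<or>
      2 \<le> card S \<and> k + 1 = m \<and> card R = 1 \<and> R \<noteq> level k \<or>
      1 \<le> k \<and> k < m \<and> 2 \<le> card R \<and> (card S = 1 \<or> k + 1 = m \<and> R \<noteq> level k))"

definition triangle_image :: "nat \<Rightarrow> 'n set \<Rightarrow> nat \<Rightarrow> 'n set \<Rightarrow> 'n set set" where
  "triangle_image k R m S =
    (if 2 \<le> card S \<and> k + 1 = m \<and> card R = 1 then {level k, level k - R, S}
     else if 2 \<le> card S \<and> k + 1 \<noteq> m then {level (m - 1), R, S}
     else {level (k - 1), R, S})"

lemma admissible_cases:
  assumes "admissible k R m S"
  obtains (A) "2 \<le> card S" "1 \<le> m" "k + 2 \<le> m \<or> k = m \<and> (\<exists>x\<in>S. R = S - {x})"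
      "triangle_image k R m S = {level (m - 1), R, S}"
    | (B) "2 \<le> card S" "k + 1 = m" "card R = 1" "R \<noteq> level k"
      "triangle_image k R m S = {level k, level k - R, S}"
    | (C) "1 \<le> k" "k < m" "2 \<le> card R" "card S = 1 \<or> k + 1 = m \<and> R \<noteq> level k"
      "triangle_image k R m S = {level (k - 1), R, S}"
proof -
  consider (A) "2 \<le> card S" "1 \<le> m" "k + 2 \<le> m \<or> k = m \<and> (\<exists>x\<in>S. R = S - {x})"
    | (B) "2 \<le> card S" "k + 1 = m" "card R = 1" "R \<noteq> level k"
    | (C) "1 \<le> k" "k < m" "2 \<le> card R" "card S = 1 \<or> k + 1 = m \<and> R \<noteq> level k"
    using assms unfolding admissible_def by blast
  thus thesis
  proof cases
    case A
    hence "k + 1 \<noteq> m" by auto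
    thus thesis using A that(1) by (simp add: triangle_image_def)
  next
    case B thus thesis using that(2) by (simp add: triangle_image_def)
  next
    case C thus thesis using that(3) by (auto simp: triangle_image_def)
  qed
qed

lemma admissible_if_wide_top:
  assumes face: "convex hull (rho ` {{}, below k \<union> R, below m \<union> S}) face_of order_polytope"
    and R: "R \<subseteq> level k" "R \<noteq> {}" and S: "S \<subseteq> level m" "S \<noteq> {}"
    and sub: "below k \<union> R \<subset> below m \<union> S" and wide: "wide_ideal (below m \<union> S)"
  shows "admissible k R m S"
proof -
  let ?M = "below k \<union> R" and ?N = "below m \<union> S"
  have m: "1 \<le> m" "2 \<le> card S" using wide wide_ideal_below_Un_iff[OF S] by auto
  have "k \<le> m" using below_Un_subset(1)[OF R S(1)] sub by blast
  have ideals: "poset_ideal ?M" "poset_ideal ?N" using R S by (simp_all add: poset_ideal_below_Un)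
  have top_gap: "\<exists>x. ?N - ?M = {x}" if "?N - ?M \<subseteq> level m"
    by (rule face_of_order_polytope_gap_singleton[OF face, where P = ?M and Q = ?N])
      (use ideals sub that poset_antichain_level in auto)
  have bottom: "card R = 1" if "k = 0"
    using that face_of_order_polytope_bottom_singleton[OF face ideals] sub R
    by (simp add: below_def poset_antichain_level)
  consider "k + 2 \<le> m" | "k = m" | "k + 1 = m" using \<open>k \<le> m\<close> by linarith
  thus ?thesis
  proof cases
    case 1 thus ?thesis using R S m unfolding admissible_def by blast
  next
    case 2
    hence "R \<subseteq> S" "?N - ?M = S - R" using below_Un_subset(2)[OF R S(1)] sub R(1) S(1)
      by (auto simp: below_def level_def)
    moreover obtain x where "?N - ?M = {x}" using top_gap \<open>?N - ?M = S - R\<close> S(1) by auto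
    ultimately have "x \<in> S" "R = S - {x}" by auto
    thus ?thesis using R S m 2 unfolding admissible_def by blast
  next
    case 3
    have "R \<noteq> level k"
    proof
      assume "R = level k"
      hence "?N - ?M = S" using 3 below_Suc[of k] S(1) by (auto simp: below_def level_def)
      thus False using top_gap m(2) S(1) by fastforce
    qed
    moreover have "1 \<le> card R" using R(2) by (simp add: Suc_le_eq card_gt_0_iff)
    ultimately show ?thesis using R S m 3 bottom unfolding admissible_def by fastforce
  qed
qed

lemma admissible_if_wide_bottom:
  assumes R: "R \<subseteq> level k" "R \<noteq> {}" and S: "S \<subseteq> level m" "S \<noteq> {}"
    and sub: "below k \<union> R \<subseteq> below m \<union> S"
    and wide: "wide_ideal (below k \<union> R)" "\<not> wide_ideal (below m \<union> S)"
  shows "admissible k R m S"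
proof -
  have k: "1 \<le> k" "2 \<le> card R" using wide(1) wide_ideal_below_Un_iff[OF R] by auto
  have "k \<le> m" using below_Un_subset(1)[OF R S(1) sub] .
  hence "\<not> 2 \<le> card S" using wide(2) wide_ideal_below_Un_iff[OF S] k(1) by auto
  moreover have "1 \<le> card S" using S(2) by (simp add: Suc_le_eq card_gt_0_iff)
  ultimately have "card S = 1" by linarith
  moreover have "k \<noteq> m"
  proof
    assume "k = m"
    hence "card R \<le> card S" using below_Un_subset(2)[OF R S(1) sub] by (simp add: card_mono)
    thus False using k(2) \<open>card S = 1\<close> by simp
  qed
  ultimately show ?thesis using R S k \<open>k \<le> m\<close> unfolding admissible_def by auto
qed

lemma Deltastar_O_admissible:
  assumes "T \<in> Deltastar_O"
  obtains k R m S where "admissible k R m S" "T = {{}, below k \<union> R, below m \<union> S}"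
proof -
  obtain M N where T: "T = {{}, M, N}" and ideals: "poset_ideal M" "poset_ideal N"
    and "M \<noteq> {}" "M \<subset> N" and face: "convex hull (rho ` T) face_of order_polytope"
    and wide: "wide_ideal M \<or> wide_ideal N"
    by (rule Deltastar_O_shape[OF assms])
  obtain k R where R: "R \<subseteq> level k" "R \<noteq> {}" "M = below k \<union> R"
    by (rule poset_ideal_decompose[OF ideals(1) \<open>M \<noteq> {}\<close>])
  have "N \<noteq> {}" using \<open>M \<subset> N\<close> by blast
  then obtain m S where S: "S \<subseteq> level m" "S \<noteq> {}" "N = below m \<union> S"
    by (rule poset_ideal_decompose[OF ideals(2)])
  have "admissible k R m S"
  proof (cases "wide_ideal N")
    case True
    thus ?thesis using admissible_if_wide_top face T R S \<open>M \<subset> N\<close> by simp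
  next
    case False
    moreover have "below k \<union> R \<subseteq> below m \<union> S" using \<open>M \<subset> N\<close> R(3) S(3) by blast
    ultimately show ?thesis using admissible_if_wide_bottom[OF R(1,2) S(1,2)] wide R(3) S(3) by blast
  qed
  thus thesis using that T R(3) S(3) by blast
qed

lemma Deltastar_C_intro_level_pair:
  assumes "Z \<in> Delta_C" "level (j - 1) \<in> Z" "V \<in> Z" "1 \<le> j" "V \<subseteq> level j" "2 \<le> card V"
  shows "Z \<in> Deltastar_C"
proof (rule Deltastar_C_intro[OF assms(1-3)])
  have "V \<noteq> {}" using assms(6) by auto
  thus "level (j - 1) \<noteq> V" using level_unique[of V "j - 1" j] assms(4,5) by auto
qed (use assms Estar_C_level_pair in auto)

lemma triangle_image_mem_Deltastar_C:
  assumes adm: "admissible k R m S"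
  shows "triangle_image k R m S \<in> Deltastar_C"
proof -
  have R: "R \<subseteq> level k" "R \<noteq> {}" and S: "S \<subseteq> level m" "S \<noteq> {}"
    using adm by (auto simp: admissible_def)
  have L: "level j \<noteq> {}" if "j \<le> m" for j using level_nonempty[OF S that] .
  from adm show ?thesis
  proof (cases rule: admissible_cases)
    case A
    have "{level (m - 1), R, S} \<in> Delta_C"
    proof (cases "k = m")
      case True
      then obtain x where "x \<in> S" "R = S - {x}" using A(3) by auto
      moreover have "{S, S - {x}, level (m - 1)} \<in> Delta_C"
        using A(2) S L[of "m - 1"] \<open>x \<in> S\<close> Diff_singleton_nonempty_if_card_ge_2[OF A(1)]
        by (intro chain_polytope_triangle_remove) auto
      ultimately show ?thesis by (simp add: insert_commute)
    next
      case False
      thus ?thesis using A(3) L[of "m - 1"] R S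
        by (intro chain_polytope_triangle_levels[where a = "m - 1" and b = k and c = m]) auto
    qed
    thus ?thesis using A S by (intro Deltastar_C_intro_level_pair[where j = m and V = S]) auto
  next
    case B
    obtain y where "R = {y}" using B(3) by (rule card_1_singletonE)
    hence "{level k, level k - R, S} \<in> Delta_C"
      using B R S by (simp, intro chain_polytope_triangle_remove) auto
    moreover have "m - 1 = k" using B(2) by simp
    ultimately show ?thesis using B S by (intro Deltastar_C_intro_level_pair[where j = m and V = S]) auto
  next
    case C
    have "{level (k - 1), R, S} \<in> Delta_C"
      using C(1,2) L[of "k - 1"] R S
      by (intro chain_polytope_triangle_levels[where a = "k - 1" and b = k and c = m]) auto
    thus ?thesis using C R by (intro Deltastar_C_intro_level_pair[where j = k and V = R]) auto
  qed
qed

text \<open>The member of greatest level, ties broken by size; it recovers \<open>(m, S)\<close> from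
  \<open>triangle_image k R m S\<close>.\<close>
definition top_member :: "'n set set \<Rightarrow> nat \<Rightarrow> 'n set \<Rightarrow> bool" where
  "top_member Z m S \<longleftrightarrow> S \<in> Z \<and> S \<subseteq> level m \<and> S \<noteq> {} \<and>
     (\<forall>Y\<in>Z - {S}. \<exists>a. Y \<subseteq> level a \<and> Y \<noteq> {} \<and> (a < m \<or> a = m \<and> card Y < card S))"

lemma top_member_unique:
  assumes "top_member Z m S" "top_member Z m' S'"
  shows "m = m' \<and> S = S'"
proof -
  have S: "S \<subseteq> level m" "S \<noteq> {}" "S' \<subseteq> level m'" "S' \<noteq> {}" "S \<in> Z" "S' \<in> Z"
    using assms unfolding top_member_def by blast+
  show ?thesis
  proof (cases "S = S'")
    case True
    thus ?thesis using level_unique[OF S(1) _ S(2), of m'] S(3) by simp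
  next
    case False
    obtain a where a: "S' \<subseteq> level a" "a < m \<or> a = m \<and> card S' < card S"
      using assms(1) S(6) False unfolding top_member_def by blast
    obtain b where b: "S \<subseteq> level b" "b < m' \<or> b = m' \<and> card S < card S'"
      using assms(2) S(5) False unfolding top_member_def by blast
    have "a = m'" "b = m" using level_unique a(1) b(1) S by blast+
    thus ?thesis using a(2) b(2) by linarith
  qed
qed

lemma top_member_triangle_image:
  assumes adm: "admissible k R m S"
  shows "top_member (triangle_image k R m S) m S"
proof -
  have R: "R \<subseteq> level k" "R \<noteq> {}" and S: "S \<subseteq> level m" "S \<noteq> {}"
    using adm by (auto simp: admissible_def)
  have L: "level j \<noteq> {}" if "j \<le> m" for j using level_nonempty[OF S that] .
  have "\<exists>a. Y \<subseteq> level a \<and> Y \<noteq> {} \<and> (a < m \<or> a = m \<and> card Y < card S)"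
    if "Y \<in> triangle_image k R m S - {S}" for Y
    using adm
  proof (cases rule: admissible_cases)
    case A
    have "card (S - {x}) < card S" if "x \<in> S" for x using that by (intro card_Diff1_less) auto
    thus ?thesis using A \<open>Y \<in> _\<close> L[of "m - 1"] R S by auto
  next
    case B
    hence "level k - R \<noteq> {}" using R(1) by blast
    thus ?thesis using B \<open>Y \<in> _\<close> L[of k] by (intro exI[of _ k]) auto
  next
    case C
    hence "Y = level (k - 1) \<or> Y = R" using \<open>Y \<in> _\<close> by auto
    thus ?thesis
    proof
      assume "Y = level (k - 1)"
      thus ?thesis using C(1,2) L[of "k - 1"] by (intro exI[of _ "k - 1"]) auto
    qed (use C(2) R in auto)
  qed
  moreover have "S \<in> triangle_image k R m S" by (cases rule: admissible_cases[OF adm]) auto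
  ultimately show ?thesis using S unfolding top_member_def by blast
qed

lemma triangle_image_kinds:
  assumes "admissible k R m S"
  obtains (AB) X where "triangle_image k R m S = {level (m - 1), X, S}" "2 \<le> card S"
      "X \<noteq> level (m - 1)" "X \<noteq> S" "R = (if X \<subseteq> level (m - 1) then level (m - 1) - X else X)"
    | (C) "triangle_image k R m S = {level (k - 1), R, S}" "1 \<le> k" "R \<subseteq> level k" "R \<noteq> {}"
      "R \<noteq> S" "2 \<le> card S \<Longrightarrow> level (m - 1) \<notin> triangle_image k R m S"
proof -
  have R: "R \<subseteq> level k" "R \<noteq> {}" and S: "S \<subseteq> level m" "S \<noteq> {}"
    using assms by (auto simp: admissible_def)
  have level_ne: "X \<noteq> Y" if "X \<subseteq> level a" "X \<noteq> {}" "Y \<subseteq> level b" "a \<noteq> b" for X Y a b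
    using that level_unique by blast
  from assms show thesis
  proof (cases rule: admissible_cases)
    case A
    have "\<not> R \<subseteq> level (m - 1)" using A(2,3) R level_unique[of R k "m - 1"] by auto
    moreover have "R \<noteq> S" using A(3) level_ne[OF R S(1)] by auto
    ultimately show thesis using that(1)[of R] A by auto
  next
    case B
    have "level k - R \<noteq> {}" using B(4) R(1) by blast
    hence "level k - R \<noteq> S" using B(2) level_ne[of "level k - R" k S m] S(1) by auto
    moreover have "level k - R \<noteq> level k" "level k - (level k - R) = R" using R by blast+
    moreover have "m - 1 = k" using B(2) by simp
    ultimately show thesis using that(1)[of "level k - R"] B by auto
  next
    case C
    have "R \<noteq> S" using C(2) level_ne[OF R S(1)] by auto
    moreover have "level (m - 1) \<notin> {level (k - 1), R, S}" if "2 \<le> card S"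
    proof -
      have "k + 1 = m" "R \<noteq> level k" using C(4) that by auto
      moreover have "level (m - 1) \<noteq> {}" using level_nonempty[OF S] by simp
      ultimately show ?thesis
        using level_ne[of "level (m - 1)" "m - 1" _ "k - 1"] level_ne[of "level (m - 1)" "m - 1" S m]
          S(1) C(1) by auto
    qed
    ultimately show thesis using that(2) C R by simp
  qed
qed

lemma triangle_image_eq_same_top:
  assumes adm: "admissible k R m S" "admissible k' R' m S"
    and same: "triangle_image k' R' m S = triangle_image k R m S"
  shows "R = R'"
  using adm(1)
proof (cases rule: triangle_image_kinds)
  case (AB X)
  from adm(2) show ?thesis
  proof (cases rule: triangle_image_kinds)
    case AB': (AB X')
    have "X \<in> {level (m - 1), X', S}" using same AB(1) AB'(1) by auto
    hence "X = X'" using AB(3,4) by blast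
    thus ?thesis using AB(5) AB'(5) by simp
  next
    case C
    thus ?thesis using AB(1,2) same by auto
  qed
next
  case C
  from adm(2) show ?thesis
  proof (cases rule: triangle_image_kinds)
    case (AB X')
    thus ?thesis using C(6) same by auto
  next
    case C': C
    show ?thesis
    proof (rule ccontr)
      assume "R \<noteq> R'"
      moreover have "R \<in> {level (k' - 1), R', S}" using same C(1) C'(1) by auto
      moreover have "R' \<in> {level (k - 1), R, S}" using same C(1) C'(1) by auto
      ultimately have "R = level (k' - 1)" "R' = level (k - 1)" using C(5) C'(5) by auto
      hence "k = k' - 1" "k' = k - 1" using C(3,4) C'(3,4) level_unique by auto
      thus False using C(2) by linarith
    qed
  qed
qed

lemma triangle_image_inj:
  assumes adm: "admissible k R m S" "admissible k' R' m' S'"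
    and eq: "triangle_image k R m S = triangle_image k' R' m' S'"
  shows "(k, R, m, S) = (k', R', m', S')"
proof -
  have "m' = m" "S' = S"
    using top_member_unique[OF top_member_triangle_image[OF adm(1)]] top_member_triangle_image[OF adm(2)]
    eq by auto
  hence "R = R'" using triangle_image_eq_same_top[OF adm(1)] adm(2) eq by simp
  moreover have "R \<subseteq> level k" "R \<noteq> {}" "R' \<subseteq> level k'" using adm by (simp_all add: admissible_def)
  ultimately have "k = k'" using level_unique by blast
  thus ?thesis using \<open>R = R'\<close> \<open>m' = m\<close> \<open>S' = S\<close> by simp
qed

theorem card_Deltastar_O_le_card_Deltastar_C:
  "card (Deltastar_O :: 'n set set set) \<le> card (Deltastar_C :: 'n set set set)"
proof (rule card_le_if_cover_and_injection)
  let ?X = "{(k, R, m, S). admissible k R m S}"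
  show "(Deltastar_O :: 'n set set set) \<subseteq> (\<lambda>(k, R, m, S). {{}, below k \<union> R, below m \<union> S}) ` ?X"
  proof
    fix T :: "'n set set" assume "T \<in> Deltastar_O"
    then obtain k R m S where "admissible k R m S" "T = {{}, below k \<union> R, below m \<union> S}"
      by (rule Deltastar_O_admissible)
    thus "T \<in> (\<lambda>(k, R, m, S). {{}, below k \<union> R, below m \<union> S}) ` ?X"
      by (intro image_eqI[where x = "(k, R, m, S)"]) auto
  qed
  show "inj_on (\<lambda>(k, R, m, S). triangle_image k R m S) ?X"
    by (rule inj_onI) (auto dest: triangle_image_inj)
  show "(\<lambda>(k, R, m, S). triangle_image k R m S) ` ?X \<subseteq> Deltastar_C"
    by (auto intro: triangle_image_mem_Deltastar_C)
qed simp

end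

theorem lemma3p4:
  assumes "maximal_ranked TYPE('n::{finite,order})"
  shows "card (Deltastar_O :: 'n set set set) \<le> card (Deltastar_C :: 'n set set set)"
proof -
  interpret ranked_ordinal_sum "poset_rank :: 'n \<Rightarrow> nat"
    using maximal_ranked_less_iff[OF assms] poset_rank_attained by unfold_locales
  show ?thesis by (rule card_Deltastar_O_le_card_Deltastar_C)
qed

end
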